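(* Let $A$ be an $n\times m$ real matrix with $n\ge 2$ and $m\geq2$, and suppose that for some $k$ the $k$th column of $A$ has exactly one nonzero entry. Let $\tilde A$ be the $n\times(m-1)$ matrix obtained from $A$ by deleting its $k$th column. Then $G^{[2]}_{\tilde A,\tilde A^t}$ is odd$^*$ (respectively odd, respectively steady) if and only if $G^{[2]}_{A,A^t}$ is odd$^*$ (respectively odd, respectively steady).
   Context: DSR graphs: for $P\in\mathbb{R}^{n\times m}$, $Q\in\mathbb{R}^{m\times n}$, $G_{P,Q}$ is the signed, labelled bipartite digraph with S-vertices $S_1,\dots,S_n$ and R-vertices $R_1,\dots,R_m$, with an arc $R_j\to S_i$ of sign $\mathrm{sign}(P_{ij})$ iff $P_{ij}\ne0$ and an arc $S_i\to R_j$ of sign $\mathrm{sign}(Q_{ji})$ iff $Q_{ji}\ne0$; antiparallel arcs of equal sign are merged into a single undirected edge. An edge arising from $P_{ij}\ne0$ (R-to-S or undirected) has label $|P_{ij}|$; an edge with only S-to-R orientation has label $\infty$. Walks traverse edges consistently with orientation; a cycle is a nonempty closed walk repeating no vertex except first$=$last. The parity of a cycle $W$ is $(-1)^{|W|/2}\mathrm{sign}(W)$ ($|W|$ = length, $\mathrm{sign}(W)$ = product of edge signs); e-cycles have parity $1$. A cycle $(e_1,\dots,e_{2r})$ is an s-cycle if all labels are finite and $\prod l(e_{2i-1})=\prod l(e_{2i})$. Two cycles have odd intersection if they can be oriented so as to induce the same direction on every common edge and each connected component of their intersection has odd length. A DSR graph is odd if it has no e-cycles; odd$^*$ if all e-cycles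 are s-cycles and no two e-cycles have odd intersection; steady if all cycles are s-cycles. DSR$^{[2]}$ graph: for $A\in\mathbb{R}^{n\times m}$, $B\in\mathbb{R}^{m\times n}$, $n\ge2$, let $\overline{\mathbf L}^A\in\mathbb{R}^{\binom n2\times mn}$ (rows $(i,j)$, $i<j$; columns $(k,l)$, $1\le k\le m$, $1\le l\le n$) have entries $A_{jk}$ if $l=i$, $-A_{ik}$ if $l=j$, $0$ otherwise, and $\underline{\mathbf L}^B\in\mathbb{R}^{mn\times\binom n2}$ have $(k,l),(i,j)$ entry $B_{kj}$ if $l=i$, $-B_{ki}$ if $l=j$, $0$ otherwise. Then $G^{[2]}_{A,B}:=G_{\overline{\mathbf L}^A,\underline{\mathbf L}^B}$. *)

theory Defs
  imports Main "HOL-Library.Extended_Real"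
begin

text \<open>A DSR graph G_{P,Q} with S-vertices indexed by SI and R-vertices indexed by RI.
  P s r plays the role of P_{sr} (arc R_r -> S_s), Q r s the role of Q_{rs} (arc S_s -> R_r).\<close>

datatype ('a, 'b) vtx = SV 'a | RV 'b

text \<open>Edges between S_s and R_r: UE = merged undirected edge, RSA = arc R_r -> S_s only,
  SRA = arc S_s -> R_r only.\<close>
datatype ('a, 'b) edge = UE 'a 'b | RSA 'a 'b | SRA 'a 'b

definition dsr_edges ::
  "'a set \<Rightarrow> 'b set \<Rightarrow> ('a \<Rightarrow> 'b \<Rightarrow> real) \<Rightarrow> ('b \<Rightarrow> 'a \<Rightarrow> real) \<Rightarrow> ('a, 'b) edge set" where
  "dsr_edges SI RI P Q =
     {UE s r | s r. s \<in> SI \<and> r \<in> RI \<and> P s r \<noteq> 0 \<and> Q r s \<noteq> 0 \<and> sgn (P s r) = sgn (Q r s)}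
   \<union> {RSA s r | s r. s \<in> SI \<and> r \<in> RI \<and> P s r \<noteq> 0 \<and> \<not> (Q r s \<noteq> 0 \<and> sgn (P s r) = sgn (Q r s))}
   \<union> {SRA s r | s r. s \<in> SI \<and> r \<in> RI \<and> Q r s \<noteq> 0 \<and> \<not> (P s r \<noteq> 0 \<and> sgn (P s r) = sgn (Q r s))}"

fun edge_sign :: "('a \<Rightarrow> 'b \<Rightarrow> real) \<Rightarrow> ('b \<Rightarrow> 'a \<Rightarrow> real) \<Rightarrow> ('a, 'b) edge \<Rightarrow> real" where
  "edge_sign P Q (UE s r) = sgn (P s r)"
| "edge_sign P Q (RSA s r) = sgn (P s r)"
| "edge_sign P Q (SRA s r) = sgn (Q r s)"

fun edge_label :: "('a \<Rightarrow> 'b \<Rightarrow> real) \<Rightarrow> ('a, 'b) edge \<Rightarrow> ereal" where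
  "edge_label P (UE s r) = ereal \<bar>P s r\<bar>"
| "edge_label P (RSA s r) = ereal \<bar>P s r\<bar>"
| "edge_label P (SRA s r) = \<infinity>"

fun traverses :: "('a, 'b) edge \<Rightarrow> ('a, 'b) vtx \<Rightarrow> ('a, 'b) vtx \<Rightarrow> bool" where
  "traverses (UE s r) u v = ((u = SV s \<and> v = RV r) \<or> (u = RV r \<and> v = SV s))"
| "traverses (RSA s r) u v = (u = RV r \<and> v = SV s)"
| "traverses (SRA s r) u v = (u = SV s \<and> v = RV r)"

fun edge_ends :: "('a, 'b) edge \<Rightarrow> ('a, 'b) vtx set" where
  "edge_ends (UE s r) = {SV s, RV r}"
| "edge_ends (RSA s r) = {SV s, RV r}"
| "edge_ends (SRA s r) = {SV s, RV r}"

definition dsr_cycle ::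
  "'a set \<Rightarrow> 'b set \<Rightarrow> ('a \<Rightarrow> 'b \<Rightarrow> real) \<Rightarrow> ('b \<Rightarrow> 'a \<Rightarrow> real)
   \<Rightarrow> ('a, 'b) vtx list \<Rightarrow> ('a, 'b) edge list \<Rightarrow> bool" where
  "dsr_cycle SI RI P Q vs es \<longleftrightarrow>
     vs \<noteq> [] \<and> length es = length vs \<and> distinct vs \<and> distinct es \<and>
     set es \<subseteq> dsr_edges SI RI P Q \<and>
     (\<forall>k < length es. traverses (es ! k) (vs ! k) (vs ! ((k + 1) mod length vs)))"

definition cycle_parity :: "('a \<Rightarrow> 'b \<Rightarrow> real) \<Rightarrow> ('b \<Rightarrow> 'a \<Rightarrow> real) \<Rightarrow> ('a, 'b) edge list \<Rightarrow> real" where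
  "cycle_parity P Q es = (-1) ^ (length es div 2) * prod_list (map (edge_sign P Q) es)"

definition e_cycle ::
  "'a set \<Rightarrow> 'b set \<Rightarrow> ('a \<Rightarrow> 'b \<Rightarrow> real) \<Rightarrow> ('b \<Rightarrow> 'a \<Rightarrow> real)
   \<Rightarrow> ('a, 'b) vtx list \<Rightarrow> ('a, 'b) edge list \<Rightarrow> bool" where
  "e_cycle SI RI P Q vs es \<longleftrightarrow> dsr_cycle SI RI P Q vs es \<and> cycle_parity P Q es = 1"

text \<open>s-cycle (es = [e_1,...,e_{2r}], 0-based positions: even positions = e_1,e_3,...).\<close>
definition s_cycle :: "('a \<Rightarrow> 'b \<Rightarrow> real) \<Rightarrow> ('a, 'b) edge list \<Rightarrow> bool" where
  "s_cycle P es \<longleftrightarrow>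
     (\<forall>e \<in> set es. edge_label P e \<noteq> \<infinity>) \<and>
     (\<Prod>k \<in> {k. k < length es \<and> even k}. edge_label P (es ! k)) =
     (\<Prod>k \<in> {k. k < length es \<and> odd k}. edge_label P (es ! k))"

definition cycle_dirs ::
  "('a, 'b) vtx list \<Rightarrow> ('a, 'b) edge list \<Rightarrow> (('a, 'b) edge \<times> ('a, 'b) vtx \<times> ('a, 'b) vtx) set" where
  "cycle_dirs vs es = {(es ! k, vs ! k, vs ! ((k + 1) mod length vs)) | k. k < length es}"

text \<open>Adjacency of common edges (sharing an endpoint); components of the intersection
  are the classes of its reflexive-transitive closure.\<close>
definition common_adj :: "('a, 'b) edge set \<Rightarrow> (('a, 'b) edge \<times> ('a, 'b) edge) set" where
  "common_adj C = {(e, f). e \<in> C \<and> f \<in> C \<and> edge_ends e \<inter> edge_ends f \<noteq> {}}"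

definition odd_intersection ::
  "('a, 'b) vtx list \<Rightarrow> ('a, 'b) edge list \<Rightarrow> ('a, 'b) vtx list \<Rightarrow> ('a, 'b) edge list \<Rightarrow> bool" where
  "odd_intersection vs1 es1 vs2 es2 \<longleftrightarrow>
     (let C = set es1 \<inter> set es2 in
        C \<noteq> {} \<and>
        ((\<forall>e \<in> C. \<forall>u v. (e, u, v) \<in> cycle_dirs vs1 es1 \<longrightarrow> (e, u, v) \<in> cycle_dirs vs2 es2) \<or>
         (\<forall>e \<in> C. \<forall>u v. (e, u, v) \<in> cycle_dirs vs1 es1 \<longrightarrow> (e, v, u) \<in> cycle_dirs vs2 es2)) \<and>
        (\<forall>e \<in> C. odd (card {f. (e, f) \<in> (common_adj C)\<^sup>*})))"

definition dsr_odd :: "'a set \<Rightarrow> 'b set \<Rightarrow> ('a \<Rightarrow> 'b \<Rightarrow> real) \<Rightarrow> ('b \<Rightarrow> 'a \<Rightarrow> real) \<Rightarrow> bool" where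
  "dsr_odd SI RI P Q \<longleftrightarrow> (\<forall>vs es. \<not> e_cycle SI RI P Q vs es)"

definition dsr_odd_star :: "'a set \<Rightarrow> 'b set \<Rightarrow> ('a \<Rightarrow> 'b \<Rightarrow> real) \<Rightarrow> ('b \<Rightarrow> 'a \<Rightarrow> real) \<Rightarrow> bool" where
  "dsr_odd_star SI RI P Q \<longleftrightarrow>
     (\<forall>vs es. e_cycle SI RI P Q vs es \<longrightarrow> s_cycle P es) \<and>
     (\<forall>vs1 es1 vs2 es2. e_cycle SI RI P Q vs1 es1 \<and> e_cycle SI RI P Q vs2 es2
        \<longrightarrow> \<not> odd_intersection vs1 es1 vs2 es2)"

definition dsr_steady :: "'a set \<Rightarrow> 'b set \<Rightarrow> ('a \<Rightarrow> 'b \<Rightarrow> real) \<Rightarrow> ('b \<Rightarrow> 'a \<Rightarrow> real) \<Rightarrow> bool" where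
  "dsr_steady SI RI P Q \<longleftrightarrow> (\<forall>vs es. dsr_cycle SI RI P Q vs es \<longrightarrow> s_cycle P es)"

text \<open>Matrices are functions nat => nat => real, with 0-based indices; A is n x m.
  Row indices of L-bar^A are pairs (i,j), i<j<n; column indices are (k,l), k<m, l<n.\<close>

definition S2 :: "nat \<Rightarrow> (nat \<times> nat) set" where
  "S2 n = {(i, j). i < j \<and> j < n}"

definition R2 :: "nat \<Rightarrow> nat \<Rightarrow> (nat \<times> nat) set" where
  "R2 n m = {..<m} \<times> {..<n}"

definition Lupper :: "(nat \<Rightarrow> nat \<Rightarrow> real) \<Rightarrow> nat \<times> nat \<Rightarrow> nat \<times> nat \<Rightarrow> real" where
  "Lupper A = (\<lambda>(i, j) (k, l). if l = i then A j k else if l = j then - A i k else 0)"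

definition Llower :: "(nat \<Rightarrow> nat \<Rightarrow> real) \<Rightarrow> nat \<times> nat \<Rightarrow> nat \<times> nat \<Rightarrow> real" where
  "Llower B = (\<lambda>(k, l) (i, j). if l = i then B k j else if l = j then - B k i else 0)"

definition mtranspose :: "(nat \<Rightarrow> nat \<Rightarrow> real) \<Rightarrow> nat \<Rightarrow> nat \<Rightarrow> real" where
  "mtranspose A = (\<lambda>i j. A j i)"

definition del_col :: "nat \<Rightarrow> (nat \<Rightarrow> nat \<Rightarrow> real) \<Rightarrow> nat \<Rightarrow> nat \<Rightarrow> real" where
  "del_col k A = (\<lambda>i j. A i (if j < k then j else Suc j))"

definition dsr2_odd :: "nat \<Rightarrow> nat \<Rightarrow> (nat \<Rightarrow> nat \<Rightarrow> real) \<Rightarrow> (nat \<Rightarrow> nat \<Rightarrow> real) \<Rightarrow> bool" where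
  "dsr2_odd n m A B = dsr_odd (S2 n) (R2 n m) (Lupper A) (Llower B)"

definition dsr2_odd_star :: "nat \<Rightarrow> nat \<Rightarrow> (nat \<Rightarrow> nat \<Rightarrow> real) \<Rightarrow> (nat \<Rightarrow> nat \<Rightarrow> real) \<Rightarrow> bool" where
  "dsr2_odd_star n m A B = dsr_odd_star (S2 n) (R2 n m) (Lupper A) (Llower B)"

definition dsr2_steady :: "nat \<Rightarrow> nat \<Rightarrow> (nat \<Rightarrow> nat \<Rightarrow> real) \<Rightarrow> (nat \<Rightarrow> nat \<Rightarrow> real) \<Rightarrow> bool" where
  "dsr2_steady n m A B = dsr_steady (S2 n) (R2 n m) (Lupper A) (Llower B)"

end

theory Submission
  imports Defs
begin

text \<open>Since the second matrix is the transpose of the first, every edge of G^[2]_{A,A^t}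
  is undirected. If column k of A has a single nonzero entry A p k, an R-vertex (k,l) can
  only be adjacent to the S-vertex {l,p}, whereas every R-vertex on a cycle has two distinct
  S-neighbours; so no cycle meets column k. The graph of the reduced matrix is the subgraph
  induced by the remaining vertices, injectively relabelled, and hence has the same cycles
  with the same signs, labels and mutual intersections.\<close>

lemma rtrancl_Image_map_prod:
  assumes "inj h"
  shows "(map_prod h h ` R)\<^sup>* `` {h a} = h ` (R\<^sup>* `` {a})"
proof
  show "(map_prod h h ` R)\<^sup>* `` {h a} \<subseteq> h ` (R\<^sup>* `` {a})"
  proof
    fix y assume "y \<in> (map_prod h h ` R)\<^sup>* `` {h a}"
    then have "(h a, y) \<in> (map_prod h h ` R)\<^sup>*" by simp
    then show "y \<in> h ` (R\<^sup>* `` {a})"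
    proof (induction rule: rtrancl_induct)
      case (step y z)
      then obtain b where b: "y = h b" "(a, b) \<in> R\<^sup>*" by auto
      from step.hyps(2) obtain x w where "(x, w) \<in> R" "y = h x" "z = h w" by auto
      with b assms show ?case by (auto dest: injD intro: rtrancl_into_rtrancl)
    qed simp
  qed
  show "h ` (R\<^sup>* `` {a}) \<subseteq> (map_prod h h ` R)\<^sup>* `` {h a}"
  proof
    fix y assume "y \<in> h ` (R\<^sup>* `` {a})"
    then obtain b where "y = h b" "(a, b) \<in> R\<^sup>*" by auto
    moreover from \<open>(a, b) \<in> R\<^sup>*\<close> have "(h a, h b) \<in> (map_prod h h ` R)\<^sup>*"
      by (induction rule: rtrancl_induct) (force intro: rtrancl_into_rtrancl)+
    ultimately show "y \<in> (map_prod h h ` R)\<^sup>* `` {h a}" by simp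
  qed
qed

lemma traverses_map_iff:
  "inj g \<Longrightarrow> traverses (map_edge id g e) (map_vtx id g u) (map_vtx id g v) \<longleftrightarrow> traverses e u v"
  by (cases e; cases u; cases v) (auto dest: injD)

lemma traverses_map_vtx_imp_range:
  "traverses e (map_vtx id g u) (map_vtx id g v) \<Longrightarrow> e \<in> range (map_edge id g)"
  by (cases e; cases u; cases v)
    (auto simp: image_iff intro: exI[of _ "UE _ _"] exI[of _ "RSA _ _"] exI[of _ "SRA _ _"])

lemma edge_ends_map: "edge_ends (map_edge id g e) = map_vtx id g ` edge_ends e"
  by (cases e) auto

lemma cycle_dirs_map:
  assumes "length vs = length es"
  shows "cycle_dirs (map (map_vtx id g) vs) (map (map_edge id g) es)
     = map_prod (map_edge id g) (map_prod (map_vtx id g) (map_vtx id g)) ` cycle_dirs vs es"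
proof -
  let ?F = "map_prod (map_edge id g) (map_prod (map_vtx id g) (map_vtx id g))"
  have "(k + 1) mod length vs < length vs" if "k < length es" for k
    using that assms by (intro mod_less_divisor) auto
  then have "cycle_dirs (map (map_vtx id g) vs) (map (map_edge id g) es)
      = (\<lambda>k. ?F (es ! k, vs ! k, vs ! ((k + 1) mod length vs))) ` {k. k < length es}"
    unfolding cycle_dirs_def setcompr_eq_image using assms by (intro image_cong) auto
  also have "\<dots> = ?F ` cycle_dirs vs es"
    unfolding cycle_dirs_def setcompr_eq_image image_image ..
  finally show ?thesis .
qed

lemma common_adj_map:
  assumes "inj g"
  shows "common_adj (map_edge id g ` C) = map_prod (map_edge id g) (map_edge id g) ` common_adj C"
proof -
  have "edge_ends (map_edge id g e) \<inter> edge_ends (map_edge id g f) \<noteq> {}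
          \<longleftrightarrow> edge_ends e \<inter> edge_ends f \<noteq> {}" for e f
    by (simp add: edge_ends_map image_Int[OF vtx.inj_map[OF inj_on_id assms], symmetric])
  then show ?thesis
    unfolding common_adj_def by auto
qed

lemma odd_intersection_alt:
  "odd_intersection vs1 es1 vs2 es2 \<longleftrightarrow>
     (let C = set es1 \<inter> set es2; D = {d \<in> cycle_dirs vs1 es1. fst d \<in> C} in
        C \<noteq> {} \<and>
        (D \<subseteq> cycle_dirs vs2 es2 \<or> map_prod id prod.swap ` D \<subseteq> cycle_dirs vs2 es2) \<and>
        (\<forall>e \<in> C. odd (card ((common_adj C)\<^sup>* `` {e}))))"
proof -
  have same_dir: "(\<forall>e \<in> C. \<forall>u v. (e, u, v) \<in> D1 \<longrightarrow> (e, u, v) \<in> D2)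
                   \<longleftrightarrow> {d \<in> D1. fst d \<in> C} \<subseteq> D2" for C D1 D2
    by auto
  have opposite_dir: "(\<forall>e \<in> C. \<forall>u v. (e, u, v) \<in> D1 \<longrightarrow> (e, v, u) \<in> D2)
                   \<longleftrightarrow> map_prod id prod.swap ` {d \<in> D1. fst d \<in> C} \<subseteq> D2" for C D1 D2
    by force
  have component: "{f. (e, f) \<in> R} = R `` {e}" for e :: "('a, 'b) edge" and R
    by auto
  show ?thesis
    unfolding odd_intersection_def Let_def same_dir opposite_dir component ..
qed

lemma odd_intersection_map:
  assumes "inj g" "length vs1 = length es1" "length vs2 = length es2"
  shows "odd_intersection (map (map_vtx id g) vs1) (map (map_edge id g) es1)
                          (map (map_vtx id g) vs2) (map (map_edge id g) es2)
     \<longleftrightarrow> odd_intersection vs1 es1 vs2 es2"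
proof -
  let ?e = "map_edge id g" and ?v = "map_vtx id g"
  let ?F = "map_prod ?e (map_prod ?v ?v)" and ?swap = "map_prod id prod.swap"
  let ?C = "set es1 \<inter> set es2" and ?D = "{d \<in> cycle_dirs vs1 es1. fst d \<in> set es1 \<inter> set es2}"
  have inj_e: "inj ?e" and inj_F: "inj ?F"
    using assms(1) by (simp_all add: edge.inj_map vtx.inj_map prod.inj_map)
  have C: "set (map ?e es1) \<inter> set (map ?e es2) = ?e ` ?C"
    by (simp add: image_Int[OF inj_e])
  have D: "{d \<in> ?F ` cycle_dirs vs1 es1. fst d \<in> ?e ` ?C} = ?F ` ?D"
    by (simp add: Compr_image_eq inj_image_mem_iff[OF inj_e])
  have swap: "?swap ` ?F ` X = ?F ` ?swap ` X" for X
    by (force simp: image_image)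
  have components: "(common_adj (?e ` ?C))\<^sup>* `` {?e e} = ?e ` ((common_adj ?C)\<^sup>* `` {e})" for e
    unfolding common_adj_map[OF assms(1)] rtrancl_Image_map_prod[OF inj_e] ..
  show ?thesis
    unfolding odd_intersection_alt Let_def C D swap
      cycle_dirs_map[OF assms(2)] cycle_dirs_map[OF assms(3)]
    by (simp add: inj_image_subset_iff[OF inj_F] components card_image inj_on_subset[OF inj_e])
qed

text \<open>G_{P',Q'} is the subgraph of G_{P,Q} induced by the R-vertices in the image of g.\<close>

locale dsr_R_embedding =
  fixes g :: "'b \<Rightarrow> 'c" and RI' :: "'b set" and RI :: "'c set"
    and P' :: "'a \<Rightarrow> 'b \<Rightarrow> real" and Q' :: "'b \<Rightarrow> 'a \<Rightarrow> real"
    and P :: "'a \<Rightarrow> 'c \<Rightarrow> real" and Q :: "'c \<Rightarrow> 'a \<Rightarrow> real"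
  assumes inj: "inj g" and mem_RI_iff: "\<And>r. r \<in> RI' \<longleftrightarrow> g r \<in> RI"
    and P_eq: "\<And>s r. P' s r = P s (g r)" and Q_eq: "\<And>s r. Q' r s = Q (g r) s"
begin

lemma dsr_edges_map_iff: "map_edge id g e \<in> dsr_edges SI RI P Q \<longleftrightarrow> e \<in> dsr_edges SI RI' P' Q'"
  by (cases e) (auto simp: dsr_edges_def P_eq Q_eq mem_RI_iff)

lemma dsr_cycle_map_iff:
  "dsr_cycle SI RI P Q (map (map_vtx id g) vs) (map (map_edge id g) es) \<longleftrightarrow> dsr_cycle SI RI' P' Q' vs es"
proof -
  have "distinct (map (map_vtx id g) vs) = distinct vs"
    by (simp add: distinct_map inj_on_subset[OF vtx.inj_map[OF inj_on_id inj]])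
  moreover have "distinct (map (map_edge id g) es) = distinct es"
    by (simp add: distinct_map inj_on_subset[OF edge.inj_map[OF inj_on_id inj]])
  ultimately show ?thesis
    unfolding dsr_cycle_def by (auto simp: dsr_edges_map_iff traverses_map_iff[OF inj])
qed

lemma cycle_parity_map: "cycle_parity P Q (map (map_edge id g) es) = cycle_parity P' Q' es"
proof -
  have "edge_sign P Q (map_edge id g e) = edge_sign P' Q' e" for e
    by (cases e) (auto simp: P_eq Q_eq)
  then show ?thesis by (simp add: cycle_parity_def o_def)
qed

lemma e_cycle_map_iff:
  "e_cycle SI RI P Q (map (map_vtx id g) vs) (map (map_edge id g) es) \<longleftrightarrow> e_cycle SI RI' P' Q' vs es"
  by (simp add: e_cycle_def dsr_cycle_map_iff cycle_parity_map)

lemma s_cycle_map_iff: "s_cycle P (map (map_edge id g) es) \<longleftrightarrow> s_cycle P' es"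
proof -
  have label: "edge_label P (map_edge id g e) = edge_label P' e" for e
    by (cases e) (auto simp: P_eq)
  have "(\<Prod>k \<in> {k. k < length es \<and> X k}. edge_label P (map (map_edge id g) es ! k))
      = (\<Prod>k \<in> {k. k < length es \<and> X k}. edge_label P' (es ! k))" for X
    by (rule prod.cong) (auto simp: label)
  then show ?thesis unfolding s_cycle_def by (simp add: label)
qed

lemma dsr_cycle_in_range_imp_map:
  assumes cyc: "dsr_cycle SI RI P Q vs es" and range: "set vs \<subseteq> range (map_vtx id g)"
  shows "\<exists>vs' es'. vs = map (map_vtx id g) vs' \<and> es = map (map_edge id g) es'"
proof -
  have "es ! k \<in> range (map_edge id g)" if "k < length es" for k
  proof -
    have len: "length vs = length es" using cyc by (simp add: dsr_cycle_def)
    have "traverses (es ! k) (vs ! k) (vs ! ((k + 1) mod length vs))"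
      using cyc that by (simp add: dsr_cycle_def)
    moreover have "(k + 1) mod length vs < length vs"
      using that len by (intro mod_less_divisor) auto
    then have "vs ! k \<in> range (map_vtx id g)" "vs ! ((k + 1) mod length vs) \<in> range (map_vtx id g)"
      using range that len by (auto intro: nth_mem)
    ultimately show ?thesis by (auto intro: traverses_map_vtx_imp_range)
  qed
  then have "set es \<subseteq> range (map_edge id g)"
    by (auto simp: in_set_conv_nth)
  with range have "(\<forall>v \<in> set vs. \<exists>x. v = map_vtx id g x) \<and> (\<forall>e \<in> set es. \<exists>x. e = map_edge id g x)"
    by blast
  then show ?thesis by (metis ex_map_conv)
qed

context
  fixes SI :: "'a set"
  assumes cycles_in_range: "\<And>vs es. dsr_cycle SI RI P Q vs es \<Longrightarrow> set vs \<subseteq> range (map_vtx id g)"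
begin

lemma all_dsr_cycles_iff:
  "(\<forall>vs es. dsr_cycle SI RI P Q vs es \<longrightarrow> \<Phi> vs es) \<longleftrightarrow>
   (\<forall>vs es. dsr_cycle SI RI' P' Q' vs es \<longrightarrow> \<Phi> (map (map_vtx id g) vs) (map (map_edge id g) es))"
  by (metis dsr_cycle_map_iff dsr_cycle_in_range_imp_map cycles_in_range)

lemma all_e_cycles_iff:
  "(\<forall>vs es. e_cycle SI RI P Q vs es \<longrightarrow> \<Phi> vs es) \<longleftrightarrow>
   (\<forall>vs es. e_cycle SI RI' P' Q' vs es \<longrightarrow> \<Phi> (map (map_vtx id g) vs) (map (map_edge id g) es))"
  by (metis e_cycle_def e_cycle_map_iff dsr_cycle_in_range_imp_map cycles_in_range)

lemma dsr_steady_iff: "dsr_steady SI RI' P' Q' \<longleftrightarrow> dsr_steady SI RI P Q"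
  unfolding dsr_steady_def all_dsr_cycles_iff s_cycle_map_iff ..

lemma dsr_odd_iff: "dsr_odd SI RI' P' Q' \<longleftrightarrow> dsr_odd SI RI P Q"
  using all_e_cycles_iff[of "\<lambda>_ _. False"] unfolding dsr_odd_def by blast

lemma dsr_odd_star_iff: "dsr_odd_star SI RI' P' Q' \<longleftrightarrow> dsr_odd_star SI RI P Q"
proof -
  have length_eq: "length vs = length es" if "e_cycle SI RI' P' Q' vs es" for vs es
    using that by (simp add: e_cycle_def dsr_cycle_def)
  have "(\<forall>vs1 es1 vs2 es2. e_cycle SI RI P Q vs1 es1 \<and> e_cycle SI RI P Q vs2 es2
          \<longrightarrow> \<not> odd_intersection vs1 es1 vs2 es2) \<longleftrightarrow>
        (\<forall>vs1 es1 vs2 es2. e_cycle SI RI' P' Q' vs1 es1 \<and> e_cycle SI RI' P' Q' vs2 es2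
          \<longrightarrow> \<not> odd_intersection vs1 es1 vs2 es2)"
    by (simp add: imp_conjL all_e_cycles_iff odd_intersection_map[OF inj length_eq length_eq]
        cong: imp_cong)
  then show ?thesis
    unfolding dsr_odd_star_def all_e_cycles_iff[where \<Phi> = "\<lambda>_ es. s_cycle P es"] s_cycle_map_iff
    by blast
qed

end

end

lemma dsr_edges_symmetric:
  assumes "\<And>s r. Q r s = P s r"
  shows "dsr_edges SI RI P Q = {UE s r | s r. s \<in> SI \<and> r \<in> RI \<and> P s r \<noteq> 0}"
  by (auto simp: dsr_edges_def assms)

lemma dsr_cycle_R_vertex_two_neighbours:
  assumes sym: "\<And>s r. Q r s = P s r"
    and cyc: "dsr_cycle SI RI P Q vs es" and r: "RV r \<in> set vs"
  shows "\<exists>s1 s2. s1 \<noteq> s2 \<and> s1 \<in> SI \<and> s2 \<in> SI \<and> P s1 r \<noteq> 0 \<and> P s2 r \<noteq> 0"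
proof -
  define L where "L = length vs"
  obtain i where i: "i < L" "vs ! i = RV r" using r by (auto simp: in_set_conv_nth L_def)
  define j where "j = (if i = 0 then L - 1 else i - 1)"
  have L: "length es = L" "distinct es" using cyc by (simp_all add: dsr_cycle_def L_def)
  have j: "j < L" "(j + 1) mod L = i" using i unfolding j_def by auto
  have edge: "es ! q \<in> dsr_edges SI RI P Q" "traverses (es ! q) (vs ! q) (vs ! ((q + 1) mod L))"
    if "q < L" for q
    using cyc that L by (auto simp: dsr_cycle_def L_def)
  obtain s1 where s1: "es ! i = UE s1 r" "s1 \<in> SI" "P s1 r \<noteq> 0"
    using edge[OF i(1)] i(2) by (auto simp: dsr_edges_symmetric[OF sym])
  obtain s2 where s2: "es ! j = UE s2 r" "s2 \<in> SI" "P s2 r \<noteq> 0"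
    using edge[OF j(1)] i(2) j(2) by (auto simp: dsr_edges_symmetric[OF sym])
  have "s1 \<noteq> s2"
  proof
    assume "s1 = s2"
    then have "i = j" using s1 s2 i j L by (metis nth_eq_iff_index_eq)
    then have "(i + 1) mod L = i" using j by simp
    then show False using edge(2)[OF i(1)] s1(1) i(2) by simp
  qed
  with s1 s2 show ?thesis by blast
qed

definition skip_col :: "nat \<Rightarrow> nat \<times> nat \<Rightarrow> nat \<times> nat" where
  "skip_col k = (\<lambda>(a, b). (if a < k then a else Suc a, b))"

lemma dsr_R_embedding_del_col:
  assumes "k < m"
  shows "dsr_R_embedding (skip_col k) (R2 n (m - 1)) (R2 n m)
           (Lupper (del_col k A)) (Llower (mtranspose (del_col k A)))
           (Lupper A) (Llower (mtranspose A))"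
proof
  show "inj (skip_col k)" unfolding inj_def skip_col_def by auto
  show "r \<in> R2 n (m - 1) \<longleftrightarrow> skip_col k r \<in> R2 n m" for r
    using assms by (cases r) (auto simp: R2_def skip_col_def)
  show "Lupper (del_col k A) s r = Lupper A s (skip_col k r)" for s r
    by (cases s; cases r) (auto simp: Lupper_def del_col_def skip_col_def)
  show "Llower (mtranspose (del_col k A)) r s = Llower (mtranspose A) (skip_col k r) s" for s r
    by (cases s; cases r) (auto simp: Llower_def del_col_def skip_col_def mtranspose_def)
qed

lemma Llower_mtranspose: "Llower (mtranspose A) r s = Lupper A s r"
  by (cases s; cases r) (auto simp: Lupper_def Llower_def mtranspose_def)

lemma Lupper_single_entry_col:
  assumes p: "{i. i < n \<and> A i k \<noteq> 0} = {p}"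
    and s: "s \<in> S2 n" and nz: "Lupper A s (k, l) \<noteq> 0"
  shows "s = (min l p, max l p)"
proof -
  obtain a b where ab: "s = (a, b)" "a < b" "b < n" using s by (auto simp: S2_def)
  have "x = p" if "x < n" "A x k \<noteq> 0" for x
    using p that by blast
  from this[of a] this[of b] nz ab show ?thesis by (auto simp: Lupper_def split: if_splits)
qed

lemma dsr2_cycle_avoids_single_entry_col:
  assumes p: "{i. i < n \<and> A i k \<noteq> 0} = {p}"
    and cyc: "dsr_cycle (S2 n) (R2 n m) (Lupper A) (Llower (mtranspose A)) vs es"
  shows "set vs \<subseteq> range (map_vtx id (skip_col k))"
proof
  fix v assume v: "v \<in> set vs"
  show "v \<in> range (map_vtx id (skip_col k))"
  proof (cases v)
    case (SV s)
    then show ?thesis by (metis vtx.map(1) id_apply rangeI)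
  next
    case (RV r)
    obtain a b where r: "r = (a, b)" by (cases r)
    have "a \<noteq> k"
    proof
      assume "a = k"
      then show False
        using dsr_cycle_R_vertex_two_neighbours[OF Llower_mtranspose cyc] v RV r
          Lupper_single_entry_col[of n A k p, OF p] by metis
    qed
    then have "v = map_vtx id (skip_col k) (RV (if a < k then a else a - 1, b))"
      using RV r by (auto simp: skip_col_def)
    then show ?thesis by blast
  qed
qed

theorem lemma5p1:
  fixes n m k :: nat and A :: "nat \<Rightarrow> nat \<Rightarrow> real"
  assumes "n \<ge> 2" and "m \<ge> 2" and "k < m"
    and "card {i. i < n \<and> A i k \<noteq> 0} = 1"
  shows "(dsr2_odd_star n (m - 1) (del_col k A) (mtranspose (del_col k A))
            \<longleftrightarrow> dsr2_odd_star n m A (mtranspose A))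
       \<and> (dsr2_odd n (m - 1) (del_col k A) (mtranspose (del_col k A))
            \<longleftrightarrow> dsr2_odd n m A (mtranspose A))
       \<and> (dsr2_steady n (m - 1) (del_col k A) (mtranspose (del_col k A))
            \<longleftrightarrow> dsr2_steady n m A (mtranspose A))"
proof -
  obtain p where p: "{i. i < n \<and> A i k \<noteq> 0} = {p}"
    using assms(4) card_1_singletonE by blast
  interpret dsr_R_embedding "skip_col k" "R2 n (m - 1)" "R2 n m"
    "Lupper (del_col k A)" "Llower (mtranspose (del_col k A))" "Lupper A" "Llower (mtranspose A)"
    using dsr_R_embedding_del_col[OF assms(3)] .
  have cycles_in_range: "\<And>vs es. dsr_cycle (S2 n) (R2 n m) (Lupper A) (Llower (mtranspose A)) vs es
      \<Longrightarrow> set vs \<subseteq> range (map_vtx id (skip_col k))"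
    by (rule dsr2_cycle_avoids_single_entry_col[where n = n and A = A and k = k and p = p, OF p])
  show ?thesis
    unfolding dsr2_odd_star_def dsr2_odd_def dsr2_steady_def
    using dsr_odd_star_iff dsr_odd_iff dsr_steady_iff cycles_in_range by blast
qed

end
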